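(* The standard 2-cocycle $\alpha(A,B)=\mathrm{tr}\big(\pi([A,B])-[\pi(A),\pi(B)]\big)$ on $\overline{gl}(\infty)$ is multiplicative: for all $A,B,C\in\overline{gl}(\infty)$, $\alpha(AB,C)+\alpha(BC,A)+\alpha(CA,B)=0$.
   Context: $\overline{gl}(\infty)$ is the associative algebra (and Lie algebra under the commutator) of complex matrices $A=(a_{ij})_{i,j\in\mathbb Z}$ with finitely many nonzero diagonals, i.e. there is $r=r(A)$ with $a_{ij}=0$ whenever $|i-j|>r$, with the usual matrix product. For $A\in\overline{gl}(\infty)$, $\pi(A)$ is the matrix with entries $\pi(A)_{ij}=a_{ij}$ if $i\ge0$ and $j\ge0$, and $0$ otherwise. The matrix $\pi([A,B])-[\pi(A),\pi(B)]$ has finitely many nonzero entries, so its trace is defined. *)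

theory Defs
  imports "HOL-Analysis.Analysis"
begin

type_synonym zmat = "int \<Rightarrow> int \<Rightarrow> complex"

definition gl_bar :: "zmat set" where
  "gl_bar = {A. \<exists>r::nat. \<forall>i j. \<bar>i - j\<bar> > int r \<longrightarrow> A i j = 0}"

text \<open>Usual matrix product; the sum is finite for matrices in gl_bar
  (only finitely many k with A i k * B k j nonzero).\<close>
definition zmult :: "zmat \<Rightarrow> zmat \<Rightarrow> zmat" where
  "zmult A B = (\<lambda>i j. \<Sum>k\<in>{k. A i k * B k j \<noteq> 0}. A i k * B k j)"

definition zcomm :: "zmat \<Rightarrow> zmat \<Rightarrow> zmat" where
  "zcomm A B = (\<lambda>i j. zmult A B i j - zmult B A i j)"

definition zproj :: "zmat \<Rightarrow> zmat" where
  "zproj A = (\<lambda>i j. if i \<ge> 0 \<and> j \<ge> 0 then A i j else 0)"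

definition ztrace :: "zmat \<Rightarrow> complex" where
  "ztrace M = (\<Sum>i\<in>{i. M i i \<noteq> 0}. M i i)"

definition alpha :: "zmat \<Rightarrow> zmat \<Rightarrow> complex" where
  "alpha A B = ztrace (\<lambda>i j. zproj (zcomm A B) i j - zcomm (zproj A) (zproj B) i j)"

end

theory Submission
  imports Defs
begin

text \<open>Write \<open>\<theta> i = of_bool (0 \<le> i)\<close>. If \<open>X\<close> has bandwidth \<open>r\<close>, only the finitely many
  indices \<open>\<bar>i\<bar> \<le> r\<close> contribute to the cocycle, and
  \<open>\<alpha>(X, Y) = \<Sum>\<^sub>i\<^sub>j (\<theta> i - \<theta> j) X\<^sub>i\<^sub>j Y\<^sub>j\<^sub>i\<close>. Hence
  \<open>\<alpha>(AB, C) = \<Sum>\<^sub>a\<^sub>b\<^sub>c (\<theta> a - \<theta> c) A\<^sub>a\<^sub>b B\<^sub>b\<^sub>c C\<^sub>c\<^sub>a\<close>; the two cyclic permutations give the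
  same product \<open>A\<^sub>a\<^sub>b B\<^sub>b\<^sub>c C\<^sub>c\<^sub>a\<close> with the weights \<open>\<theta> b - \<theta> a\<close> and \<open>\<theta> c - \<theta> b\<close>, and the
  three weights telescope to zero.\<close>

definition banded :: "nat \<Rightarrow> zmat \<Rightarrow> bool" where
  "banded r X \<longleftrightarrow> (\<forall>i j. int r < \<bar>i - j\<bar> \<longrightarrow> X i j = 0)"

lemma gl_bar_iff_banded: "A \<in> gl_bar \<longleftrightarrow> (\<exists>r. banded r A)"
  by (simp add: gl_bar_def banded_def)

lemma banded_zproj: "banded r X \<Longrightarrow> banded r (zproj X)"
  by (simp add: banded_def zproj_def)

lemma sum_support_eq:
  assumes "finite T" "\<And>k. k \<notin> T \<Longrightarrow> f k = 0"
  shows "(\<Sum>k\<in>{k. f k \<noteq> 0}. f k) = sum f T"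
  by (rule sum.mono_neutral_left) (use assms in auto)

lemma zmult_eq_sum_left:
  assumes "banded r X" "finite S" "{i - int r..i + int r} \<subseteq> S"
  shows "zmult X Y i j = (\<Sum>k\<in>S. X i k * Y k j)"
  unfolding zmult_def
proof (rule sum_support_eq[OF assms(2)])
  fix k assume "k \<notin> S"
  with assms(3) have "k \<notin> {i - int r..i + int r}" by blast
  then have "int r < \<bar>i - k\<bar>" by auto
  with assms(1) show "X i k * Y k j = 0" by (simp add: banded_def)
qed

lemma zmult_eq_sum_right:
  assumes "banded r X" "finite S" "{j - int r..j + int r} \<subseteq> S"
  shows "zmult Y X i j = (\<Sum>k\<in>S. Y i k * X k j)"
  unfolding zmult_def
proof (rule sum_support_eq[OF assms(2)])
  fix k assume "k \<notin> S"
  with assms(3) have "k \<notin> {j - int r..j + int r}" by blast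
  then have "int r < \<bar>k - j\<bar>" by auto
  with assms(1) show "Y i k * X k j = 0" by (simp add: banded_def)
qed

lemma banded_zmult:
  assumes A: "banded ra A" and B: "banded rb B"
  shows "banded (ra + rb) (zmult A B)"
  unfolding banded_def
proof (intro allI impI)
  fix i j assume far: "int (ra + rb) < \<bar>i - j\<bar>"
  have "zmult A B i j = (\<Sum>k\<in>{i - int ra..i + int ra}. A i k * B k j)"
    using zmult_eq_sum_left[OF A] by simp
  also have "\<dots> = 0"
    using far B by (intro sum.neutral) (auto simp: banded_def)
  finally show "zmult A B i j = 0" .
qed

text \<open>On the diagonal, the products over the nonnegative indices \<open>k\<close> cancel between
  \<open>\<pi>([X, Y])\<close> and \<open>[\<pi>(X), \<pi>(Y)]\<close>; only the terms with \<open>k < 0\<close> survive.\<close>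

lemma cocycle_diagonal_nonneg:
  assumes "banded r X" "finite S" "{i - int r..i + int r} \<subseteq> S" "0 \<le> i"
  shows "zproj (zcomm X Y) i i - zcomm (zproj X) (zproj Y) i i =
    (\<Sum>k\<in>S. of_bool (k < 0) * (X i k * Y k i - Y i k * X k i))"
proof -
  note sums = zmult_eq_sum_left[OF _ assms(2,3)] zmult_eq_sum_right[OF _ assms(2,3)]
  have "zproj (zcomm X Y) i i = (\<Sum>k\<in>S. X i k * Y k i - Y i k * X k i)"
    using assms(4) by (simp add: zproj_def zcomm_def sums[OF assms(1)] sum_subtractf)
  moreover have "zcomm (zproj X) (zproj Y) i i =
      (\<Sum>k\<in>S. of_bool (0 \<le> k) * (X i k * Y k i - Y i k * X k i))"
    using assms(4)
    by (simp add: zcomm_def sums[OF banded_zproj[OF assms(1)]] sum_subtractf[symmetric])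
      (auto intro!: sum.cong simp: zproj_def)
  ultimately show ?thesis
    by (simp add: sum_subtractf[symmetric]) (rule sum.cong; simp add: of_bool_def)
qed

lemma cocycle_diagonal_neg:
  "i < 0 \<Longrightarrow> zproj (zcomm X Y) i i - zcomm (zproj X) (zproj Y) i i = 0"
  by (simp add: zproj_def zcomm_def zmult_def)

lemma alpha_eq_sum:
  assumes X: "banded r X" and K: "finite K" "{- int r..int r} \<subseteq> K"
  shows "alpha X Y = (\<Sum>i\<in>K. \<Sum>j\<in>K. (of_bool (0 \<le> i) - of_bool (0 \<le> j)) * X i j * Y j i)"
proof -
  define D where "D i = zproj (zcomm X Y) i i - zcomm (zproj X) (zproj Y) i i" for i
  define g where "g i k = of_bool (k < 0) * (X i k * Y k i - Y i k * X k i)" for i k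
  have D_band: "D i = (\<Sum>k\<in>{i - int r..i + int r}. g i k)" if "0 \<le> i" for i
    unfolding D_def g_def using that by (intro cocycle_diagonal_nonneg[OF X]) auto
  have "alpha X Y = (\<Sum>i\<in>K. D i)"
    unfolding alpha_def ztrace_def D_def[symmetric]
  proof (rule sum_support_eq[OF K(1)])
    fix i assume "i \<notin> K"
    show "D i = 0"
    proof (cases "0 \<le> i")
      case True
      moreover from \<open>i \<notin> K\<close> K(2) have "i \<notin> {- int r..int r}" by blast
      ultimately have "int r < i" by auto
      then show ?thesis by (simp add: D_band g_def)
    qed (simp add: D_def cocycle_diagonal_neg)
  qed
  also have "\<dots> = (\<Sum>i\<in>K. \<Sum>k\<in>K. of_bool (0 \<le> i) * g i k)"
  proof (rule sum.cong[OF refl])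
    fix i
    show "D i = (\<Sum>k\<in>K. of_bool (0 \<le> i) * g i k)"
    proof (cases "0 \<le> i")
      case True
      have "D i = (\<Sum>k\<in>K \<union> {i - int r..i + int r}. g i k)"
        unfolding D_def g_def using True K(1) by (intro cocycle_diagonal_nonneg[OF X]) auto
      also have "\<dots> = (\<Sum>k\<in>K. g i k)"
      proof (rule sum.mono_neutral_right)
        show "\<forall>k\<in>K \<union> {i - int r..i + int r} - K. g i k = 0"
        proof
          fix k assume k: "k \<in> K \<union> {i - int r..i + int r} - K"
          with K(2) have "k \<notin> {- int r..int r}" by blast
          with k True show "g i k = 0" by (auto simp: g_def)
        qed
      qed (use K(1) in auto)
      finally show ?thesis using True by simp
    qed (simp add: D_def cocycle_diagonal_neg)
  qed
  also have "\<dots> = (\<Sum>i\<in>K. \<Sum>j\<in>K. (of_bool (0 \<le> i) - of_bool (0 \<le> j)) * X i j * Y j i)"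
  proof -
    define p where "p i j = of_bool (0 \<le> i \<and> j < 0) * X i j * Y j i" for i j
    define q where "q i j = of_bool (0 \<le> i \<and> j < 0) * Y i j * X j i" for i j
    have g: "of_bool (0 \<le> i) * g i j = p i j - q i j" for i j
      by (simp add: p_def q_def g_def algebra_simps)
    have weight: "(of_bool (0 \<le> i) - of_bool (0 \<le> j)) * X i j * Y j i = p i j - q j i" for i j
      by (auto simp: p_def q_def mult.commute)
    show ?thesis
      unfolding g weight sum_subtractf sum.swap[of "\<lambda>i j. q j i"] ..
  qed
  finally show ?thesis .
qed

text \<open>The box \<open>K\<close> must contain \<open>[-(ra + rb), ra + rb]\<close> for the formula above, and also
  the inner index \<open>b\<close>: a term with \<open>\<theta> a \<noteq> \<theta> c\<close> and \<open>C\<^sub>c\<^sub>a \<noteq> 0\<close> has \<open>\<bar>a\<bar> \<le> rc\<close>,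
  hence \<open>\<bar>b\<bar> \<le> ra + rc\<close> whenever \<open>A\<^sub>a\<^sub>b \<noteq> 0\<close>.\<close>

lemma alpha_zmult_eq_sum:
  assumes A: "banded ra A" and B: "banded rb B" and C: "banded rc C"
    and K: "finite K" "{- int (ra + rb + rc)..int (ra + rb + rc)} \<subseteq> K"
  shows "alpha (zmult A B) C =
    (\<Sum>a\<in>K. \<Sum>b\<in>K. \<Sum>c\<in>K. (of_bool (0 \<le> a) - of_bool (0 \<le> c)) * A a b * B b c * C c a)"
proof -
  have "alpha (zmult A B) C =
      (\<Sum>a\<in>K. \<Sum>c\<in>K. (of_bool (0 \<le> a) - of_bool (0 \<le> c)) * zmult A B a c * C c a)"
    using K by (intro alpha_eq_sum[OF banded_zmult[OF A B]]) auto
  also have "\<dots> =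
      (\<Sum>a\<in>K. \<Sum>c\<in>K. \<Sum>b\<in>K. (of_bool (0 \<le> a) - of_bool (0 \<le> c)) * A a b * B b c * C c a)"
  proof (intro sum.cong refl)
    fix a c
    show "(of_bool (0 \<le> a) - of_bool (0 \<le> c)) * zmult A B a c * C c a =
        (\<Sum>b\<in>K. (of_bool (0 \<le> a) - of_bool (0 \<le> c)) * A a b * B b c * C c a)"
    proof (cases "(0 \<le> a \<longleftrightarrow> 0 \<le> c) \<or> int rc < \<bar>c - a\<bar>")
      case True
      then show ?thesis using C by (auto simp: banded_def)
    next
      case False
      then have "\<bar>a\<bar> \<le> int rc" by auto
      then have "{a - int ra..a + int ra} \<subseteq> {- int (ra + rb + rc)..int (ra + rb + rc)}"
        by auto
      with K have "zmult A B a c = (\<Sum>b\<in>K. A a b * B b c)"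
        by (intro zmult_eq_sum_left[OF A]) auto
      then show ?thesis by (simp add: sum_distrib_left sum_distrib_right mult.assoc)
    qed
  qed
  also have "\<dots> =
      (\<Sum>a\<in>K. \<Sum>b\<in>K. \<Sum>c\<in>K. (of_bool (0 \<le> a) - of_bool (0 \<le> c)) * A a b * B b c * C c a)"
    by (intro sum.cong refl sum.swap)
  finally show ?thesis .
qed

lemma sum_rotate3:
  "(\<Sum>x\<in>K. \<Sum>y\<in>K. \<Sum>z\<in>K. f x y z) = (\<Sum>y\<in>K. \<Sum>z\<in>K. \<Sum>x\<in>K. f x y z)"
  by (subst sum.swap) (intro sum.cong refl sum.swap)

theorem mainTheorem17:
  assumes "A \<in> gl_bar" and "B \<in> gl_bar" and "C \<in> gl_bar"
  shows "alpha (zmult A B) C + alpha (zmult B C) A + alpha (zmult C A) B = 0"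
proof -
  obtain ra rb rc where A: "banded ra A" and B: "banded rb B" and C: "banded rc C"
    using assms by (auto simp: gl_bar_iff_banded)
  define K where "K = {- int (ra + rb + rc)..int (ra + rb + rc)}"
  define \<theta> :: "int \<Rightarrow> complex" where "\<theta> i = of_bool (0 \<le> i)" for i
  define F where "F a b c = A a b * B b c * C c a" for a b c
  have AB: "alpha (zmult A B) C = (\<Sum>a\<in>K. \<Sum>b\<in>K. \<Sum>c\<in>K. (\<theta> a - \<theta> c) * F a b c)"
    unfolding \<theta>_def F_def by (subst alpha_zmult_eq_sum[OF A B C]) (simp_all add: K_def mult.assoc)
  have BC: "alpha (zmult B C) A = (\<Sum>a\<in>K. \<Sum>b\<in>K. \<Sum>c\<in>K. (\<theta> b - \<theta> a) * F a b c)"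
  proof -
    have "alpha (zmult B C) A = (\<Sum>b\<in>K. \<Sum>c\<in>K. \<Sum>a\<in>K. (\<theta> b - \<theta> a) * F a b c)"
      unfolding \<theta>_def F_def
      by (subst alpha_zmult_eq_sum[OF B C A]) (simp_all add: K_def ac_simps)
    also have "\<dots> = (\<Sum>a\<in>K. \<Sum>b\<in>K. \<Sum>c\<in>K. (\<theta> b - \<theta> a) * F a b c)"
      by (rule sum_rotate3[symmetric])
    finally show ?thesis .
  qed
  have CA: "alpha (zmult C A) B = (\<Sum>a\<in>K. \<Sum>b\<in>K. \<Sum>c\<in>K. (\<theta> c - \<theta> b) * F a b c)"
  proof -
    have "alpha (zmult C A) B = (\<Sum>c\<in>K. \<Sum>a\<in>K. \<Sum>b\<in>K. (\<theta> c - \<theta> b) * F a b c)"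
      unfolding \<theta>_def F_def
      by (subst alpha_zmult_eq_sum[OF C A B]) (simp_all add: K_def ac_simps)
    also have "\<dots> = (\<Sum>a\<in>K. \<Sum>b\<in>K. \<Sum>c\<in>K. (\<theta> c - \<theta> b) * F a b c)"
      by (rule sum_rotate3)
    finally show ?thesis .
  qed
  show ?thesis
    unfolding AB BC CA sum.distrib[symmetric] by (simp add: algebra_simps)
qed

end
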